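(* There is an absolute constant $C>0$ such that the following holds. Let $Q,N\in\mathbb{N}$ with $N\ge 2$, let $(a_n)_{n\in\mathbb{Z}[i]}$ be complex numbers, $Z=\sum_{n\in\mathbb{Z}[i],\ \mathcal{N}(n)\le N}|a_n|^2$, let $\mathcal{S}\subseteq B(0,Q^{1/2})\cap(\mathbb{Z}[i]\setminus\{0\})$, and let $0<\Delta\le1/2$. Let $$U=\sum_{q\in\mathcal{S}}\ \sum_{\substack{a\bmod q\\ (a,q)=1}}\Big|\sum_{\substack{n\in\mathbb{Z}[i]\\ \mathcal{N}(n)\le N}}a_n\, e\Big(\Re\Big(\frac{na}{q}\Big)\Big)\Big|^2.$$ For $q=u+iv\in\mathcal{S}$ and $a=x+iy\in\mathbb{Z}[i]$ put $\xi(a,q)=\big(\frac{xu+yv}{\mathcal{N}(q)},\frac{xv-yu}{\mathcal{N}(q)}\big)\in\mathbb{R}^2$, and let $$K(\Delta)=\sup_{\alpha\in\mathbb{R}^2}\Big|\Big\{(a,q):\ q\in\mathcal{S},\ a\in\mathcal{R}_q,\ \min_{z\in\mathbb{Z}^2}\|\xi(a,q)-\alpha-z\|_2\le\Delta^{1/2}\Big\}\Big|,$$ where for each $q$, $\mathcal{R}_q$ is a complete system of representatives of the residue classes modulo $q$ in $\mathbb{Z}[i]$ coprime to $q$. Then $U\le C\,K(\Delta)(N+\Delta^{-1})Z$.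
   Context: $e(x)=e^{2\pi i x}$. $\mathcal{N}(q)=\Re(q)^2+\Im(q)^2$; $B(y,u)=\{w\in\mathbb{C}:|w-y|\le u\}$; $\|\cdot\|_2$ is the Euclidean norm on $\mathbb{R}^2$. "$a\bmod q$, $(a,q)=1$" means $a$ runs over a complete system of residues modulo $q$ coprime to $q$. *)

theory Defs
  imports "HOL-Analysis.Analysis"
begin

definition gint :: "complex \<Rightarrow> bool" where
  "gint z \<longleftrightarrow> Re z \<in> \<int> \<and> Im z \<in> \<int>"

definition gdvd :: "complex \<Rightarrow> complex \<Rightarrow> bool" where
  "gdvd d a \<longleftrightarrow> (\<exists>k. gint k \<and> a = d * k)"

definition gcoprime :: "complex \<Rightarrow> complex \<Rightarrow> bool" where
  "gcoprime a q \<longleftrightarrow> (\<forall>d. gint d \<and> gdvd d a \<and> gdvd d q \<longrightarrow> gdvd d 1)"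

definition gcong :: "complex \<Rightarrow> complex \<Rightarrow> complex \<Rightarrow> bool" where
  "gcong a b q \<longleftrightarrow> gdvd q (a - b)"

definition reduced_residue_system :: "complex set \<Rightarrow> complex \<Rightarrow> bool" where
  "reduced_residue_system R q \<longleftrightarrow>
     (\<forall>a\<in>R. gint a \<and> gcoprime a q) \<and>
     (\<forall>a\<in>R. \<forall>b\<in>R. gcong a b q \<longrightarrow> a = b) \<and>
     (\<forall>b. gint b \<and> gcoprime b q \<longrightarrow> (\<exists>a\<in>R. gcong a b q))"

definition gnorm :: "complex \<Rightarrow> real" where
  "gnorm q = (Re q)^2 + (Im q)^2"

definition e :: "real \<Rightarrow> complex" where
  "e x = exp (2 * pi * \<i> * complex_of_real x)"

definition xi :: "complex \<Rightarrow> complex \<Rightarrow> real \<times> real" where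
  "xi a q = ((Re a * Re q + Im a * Im q) / gnorm q,
             (Re a * Im q - Im a * Re q) / gnorm q)"

text \<open>Distance of a point of R^2 to the lattice Z^2 (min over z in Z^2 of the
  Euclidean norm; the norm on real \<times> real is the Euclidean one).\<close>
definition lattice_dist :: "real \<times> real \<Rightarrow> real" where
  "lattice_dist v = Inf {norm (v - (real_of_int m, real_of_int k)) | m k. True}"

definition Kfun :: "complex set \<Rightarrow> (complex \<Rightarrow> complex set) \<Rightarrow> real \<Rightarrow> real" where
  "Kfun S R \<Delta> = (SUP \<alpha>\<in>(UNIV :: (real \<times> real) set).
      real (card {(a, q). q \<in> S \<and> a \<in> R q \<and> lattice_dist (xi a q - \<alpha>) \<le> sqrt \<Delta>}))"

end

theory Submission
  imports Defs
begin

(*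
  For n = n1 + i n2 the phase e(Re(n a / q)) equals e(n1 x + n2 y) with (x, y) = xi(a, q), so U is a
  large-sieve sum over the points xi(a, q) of the torus R^2/Z^2 with frequencies in the square
  [-L, L]^2, L = floor(sqrt N). By duality it suffices to bound the dual sums
  sum_n |sum_r c_r e(n . xi_r)|^2. Averaging over the (L + 1)^2 translates of the frequency square
  that stay inside [0, 3L]^2 dominates them by a Hermitian form whose kernel is a product of two
  Dirichlet kernels of length P = 3L + 1, and Schur's test reduces the form to the row sums of that
  kernel. Cut the torus into M^2 cells of side 1/M, where M is about sqrt(2/Delta): the points xi_r'
  for which xi_r - xi_r' falls into a given cell lie in one disc of radius sqrt Delta, so there are
  at most K(Delta) of them, and the bound |D_P(t)| <= min(P, 1/||t||) summed over the cells is
  O(P (P + M)). Each row sum is therefore O(K P^2 (P + M)^2), which after division by (L + 1)^2 gives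
  O(K (N + 1/Delta)).
*)

section \<open>Additive characters and the Dirichlet kernel\<close>

lemma e_eq_cis: "e x = cis (2 * pi * x)"
  unfolding e_def cis_conv_exp by (simp add: mult_ac)

lemma e_add: "e (x + y) = e x * e y"
  by (simp add: e_eq_cis cis_mult distrib_left)

lemma norm_e [simp]: "cmod (e x) = 1"
  by (simp add: e_eq_cis)

lemma cnj_e: "cnj (e x) = e (- x)"
  by (simp add: e_eq_cis cis_cnj)

lemma e_of_int [simp]: "e (of_int k) = 1"
  by (simp add: e_eq_cis)

lemma e_frac: "e (frac t) = e t"
  using e_add[of "of_int \<lfloor>t\<rfloor>" "frac t"] by (simp add: frac_def)

lemma e_of_nat_mult: "e (real n * t) = e t ^ n"
  unfolding e_def by (simp add: exp_of_nat_mult[symmetric] mult_ac)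

lemma norm_1_minus_e: "cmod (1 - e t) = 2 * \<bar>sin (pi * t)\<bar>"
proof -
  define x where "x = pi * t"
  have "(cmod (1 - e t))^2 = (1 - cos (2 * x))^2 + (sin (2 * x))^2"
    by (simp add: e_eq_cis x_def cmod_power2 mult_ac)
  also have "\<dots> = (2 * sin x)^2"
  proof -
    have "(1 - (1 - 2 * s^2))^2 + (2 * s * c)^2 = (2 * s)^2 * (s^2 + c^2)" for s c :: real
      by (simp add: power2_eq_square algebra_simps)
    then show ?thesis unfolding cos_double_sin sin_double by simp
  qed
  finally have "(cmod (1 - e t))^2 = (2 * sin x)^2" .
  then have "cmod (1 - e t) = \<bar>2 * sin x\<bar>"
    by (metis real_sqrt_abs real_sqrt_unique norm_ge_zero)
  then show ?thesis by (simp add: x_def abs_mult)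
qed

lemma sin_pi_ge:
  assumes "0 \<le> f" "f \<le> 1/2"
  shows "f \<le> sin (pi * f)"
proof -
  define x where "x = pi * f"
  have "pi * f \<le> pi * (1/2)"
    by (rule mult_left_mono) (use assms in auto)
  then have x: "0 \<le> x" "x \<le> 2"
    using assms pi_less_4 unfolding x_def by (simp, linarith)
  have "\<bar>sin x - (\<Sum>m<3. sin_coeff m * x ^ m)\<bar> \<le> inverse (fact 3) * \<bar>x\<bar> ^ 3"
    by (rule Maclaurin_sin_bound)
  then have "x - x ^ 3 / 6 \<le> sin x"
    using x abs_ge_minus_self[of "sin x - x"]
    by (simp add: lessThan_nat_numeral sin_coeff_def fact_numeral)
  moreover have "x ^ 3 \<le> 4 * x"
    using mult_left_mono[OF power_mono[OF x(2) x(1), of 2] x(1)]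
    by (simp add: power3_eq_cube power2_eq_square mult_ac)
  moreover have "3 * f \<le> x"
    using mult_right_mono[OF less_imp_le[OF pi_gt3] assms(1)] by (simp add: x_def)
  ultimately show ?thesis by (simp add: x_def)
qed

definition dirichlet_kernel :: "nat \<Rightarrow> real \<Rightarrow> complex" where
  "dirichlet_kernel P t = (\<Sum>x<P. e (real x * t))"

lemma norm_dirichlet_kernel_le: "cmod (dirichlet_kernel P t) \<le> real P"
  unfolding dirichlet_kernel_def using norm_sum[of "\<lambda>x. e (real x * t)" "{..<P}"] by simp

lemma norm_dirichlet_kernel_uminus [simp]:
  "cmod (dirichlet_kernel P (- t)) = cmod (dirichlet_kernel P t)"
proof -
  have "dirichlet_kernel P (- t) = cnj (dirichlet_kernel P t)"
    unfolding dirichlet_kernel_def by (simp add: cnj_sum cnj_e)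
  then show ?thesis by simp
qed

lemma norm_dirichlet_kernel_le_inverse:
  assumes \<mu>: "0 < \<mu>" "\<mu> \<le> frac t" "\<mu> \<le> 1 - frac t"
  shows "cmod (dirichlet_kernel P t) \<le> 1 / \<mu>"
proof -
  define w where "w = e t"
  have "\<mu> \<le> sin (pi * frac t)"
  proof (cases "frac t \<le> 1/2")
    case True
    then show ?thesis using \<mu> sin_pi_ge[of "frac t"] by simp
  next
    case False
    then have "1 - frac t \<le> sin (pi * (1 - frac t))"
      using sin_pi_ge[of "1 - frac t"] frac_lt_1[of t] by simp
    then show ?thesis using \<mu> by (simp add: right_diff_distrib sin_diff)
  qed
  then have w: "2 * \<mu> \<le> cmod (1 - w)"
    using norm_1_minus_e[of "frac t"] unfolding w_def e_frac by linarith
  then have "w \<noteq> 1" using \<mu> by auto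
  then have "dirichlet_kernel P t = (1 - w ^ P) / (1 - w)"
    unfolding dirichlet_kernel_def e_of_nat_mult w_def by (simp add: sum_gp_strict)
  moreover have "cmod (1 - w ^ P) \<le> 2"
    using norm_triangle_ineq4[of 1 "w ^ P"] by (simp add: w_def norm_power)
  ultimately have "cmod (dirichlet_kernel P t) \<le> 2 / (2 * \<mu>)"
    using w \<mu> by (simp only: norm_divide) (intro frac_le, auto)
  then show ?thesis by simp
qed

definition e_dot :: "int \<times> int \<Rightarrow> real \<times> real \<Rightarrow> complex" where
  "e_dot n t = e (of_int (fst n) * fst t + of_int (snd n) * snd t)"

lemma norm_e_dot [simp]: "cmod (e_dot n t) = 1"
  by (simp add: e_dot_def)

lemma e_dot_add: "e_dot (n + k) t = e_dot n t * e_dot k t"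
  unfolding e_dot_def by (simp add: e_add[symmetric] algebra_simps)

lemma e_dot_mult_cnj: "e_dot n t * cnj (e_dot n s) = e_dot n (t - s)"
  unfolding e_dot_def cnj_e e_add[symmetric] by (simp add: algebra_simps)

lemma sum_e_dot_square:
  "(\<Sum>n\<in>{0..int m} \<times> {0..int m}. e_dot n t)
     = dirichlet_kernel (Suc m) (fst t) * dirichlet_kernel (Suc m) (snd t)"
proof -
  have side: "(\<Sum>x\<in>{0..int m}. e (of_int x * s)) = dirichlet_kernel (Suc m) s" for s
  proof -
    have "{0..int m} = int ` {0..m}" by (simp add: image_int_atLeastAtMost)
    then show ?thesis
      unfolding dirichlet_kernel_def by (simp add: sum.reindex lessThan_Suc_atMost atLeast0AtMost)
  qed
  show ?thesis
    unfolding e_dot_def e_add side[symmetric] sum_product sum.cartesian_product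
    by (simp add: case_prod_beta)
qed

definition cell :: "nat \<Rightarrow> real \<Rightarrow> nat" where
  "cell M t = nat \<lfloor>real M * frac t\<rfloor>"

lemma cell_bounds:
  "real (cell M t) \<le> real M * frac t" "real M * frac t < real (cell M t) + 1"
proof -
  have "0 \<le> \<lfloor>real M * frac t\<rfloor>" by simp
  then show "real (cell M t) \<le> real M * frac t" "real M * frac t < real (cell M t) + 1"
    unfolding cell_def by (simp_all add: of_nat_nat)
qed

lemma cell_less:
  assumes "0 < M"
  shows "cell M t < M"
proof -
  have "real M * frac t < real M" using assms frac_lt_1[of t] by simp
  then have "real (cell M t) < real M" using cell_bounds(1)[of M t] by linarith
  then show ?thesis by simp
qed

lemma dist_cell_le:
  assumes "0 < M"
  shows "\<bar>real (cell M t) / real M - frac t\<bar> \<le> 1 / real M"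
proof -
  have "\<bar>real (cell M t) - real M * frac t\<bar> \<le> 1"
    using cell_bounds[of M t] by (simp add: abs_le_iff)
  moreover have "real (cell M t) / real M - frac t = (real (cell M t) - real M * frac t) / real M"
    using assms by (simp add: field_simps)
  ultimately show ?thesis by (simp add: abs_divide divide_right_mono)
qed

text \<open>The points of cell \<open>j\<close> lie at distance at least \<open>d/M\<close> from \<open>\<int>\<close>, where
  \<open>d = min j (M - 1 - j)\<close>; there \<open>(M/d)\<^sup>2\<close> bounds the squared Dirichlet kernel, while the two
  cells next to an integer (\<open>d = 0\<close>) only get the trivial bound \<open>P\<^sup>2\<close>.\<close>
definition dirichlet_majorant :: "nat \<Rightarrow> nat \<Rightarrow> nat \<Rightarrow> real" where
  "dirichlet_majorant M P d =
     (if d = 0 then (real P)^2 else min ((real P)^2) ((real M / real d)^2))"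

definition cell_weight :: "nat \<Rightarrow> nat \<Rightarrow> nat \<Rightarrow> real" where
  "cell_weight M P j = dirichlet_majorant M P (min j (M - 1 - j))"

lemma dirichlet_majorant_nonneg: "0 \<le> dirichlet_majorant M P d"
  by (simp add: dirichlet_majorant_def)

lemma cell_weight_nonneg: "0 \<le> cell_weight M P j"
  by (simp add: cell_weight_def dirichlet_majorant_nonneg)

lemma norm_dirichlet_kernel_sq_le_cell_weight:
  assumes "0 < M"
  shows "(cmod (dirichlet_kernel P t))^2 \<le> cell_weight M P (cell M t)"
proof -
  define d where "d = min (cell M t) (M - 1 - cell M t)"
  have "(cmod (dirichlet_kernel P t))^2 \<le> (real P)^2"
    by (intro power_mono norm_dirichlet_kernel_le) simp
  moreover have "(cmod (dirichlet_kernel P t))^2 \<le> (real M / real d)^2" if "d \<noteq> 0"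
  proof -
    have "real d \<le> real M * frac t" "real d \<le> real M * (1 - frac t)"
      using cell_bounds[of M t] cell_less[OF assms, of t] by (auto simp: d_def algebra_simps)
    then have "cmod (dirichlet_kernel P t) \<le> 1 / (real d / real M)"
      using that assms by (intro norm_dirichlet_kernel_le_inverse) (auto simp: field_simps)
    then show ?thesis by (intro power_mono) auto
  qed
  ultimately show ?thesis
    unfolding cell_weight_def dirichlet_majorant_def d_def[symmetric] by auto
qed

lemma sum_inverse_squares_le:
  assumes "0 < a"
  shows "(\<Sum>d\<in>{a<..a+n}. 1 / (real d)^2) \<le> 1 / real a - 1 / real (a + n)"
proof (induction n)
  case (Suc n)
  define x where "x = real (a + n)"
  have x: "0 < x" using assms by (simp add: x_def)
  have "1 / (x + 1)^2 \<le> 1 / (x * (x + 1))"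
    using x by (intro divide_left_mono) (auto simp: power2_eq_square)
  also have "\<dots> = 1 / x - 1 / (x + 1)"
    using x by (simp add: field_simps)
  finally have "1 / (x + 1)^2 \<le> 1 / x - 1 / (x + 1)" .
  moreover have "{a<..a + Suc n} = insert (Suc (a + n)) {a<..a + n}" by auto
  ultimately show ?case using Suc.IH by (simp add: x_def add_ac)
qed simp

lemma sum_dirichlet_majorant_le:
  assumes M: "0 < M" and P: "0 < P"
  shows "(\<Sum>d<M. dirichlet_majorant M P d) \<le> 2 * (real P)^2 + 2 * real M * real P"
proof -
  define h where "h = dirichlet_majorant M P"
  define a where "a = nat \<lceil>real M / real P\<rceil>"
  have a: "real M / real P \<le> real a" "real a < real M / real P + 1"
    unfolding a_def using ceiling_correct[of "real M / real P"] by (simp_all add: of_nat_nat)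
  have "0 < real M / real P" using M P by simp
  then have a0: "0 < a" using a by linarith
  have "(\<Sum>d<M. h d) \<le> (\<Sum>d\<in>{..a} \<union> {a<..a+M}. h d)"
    by (intro sum_mono2) (auto simp: h_def dirichlet_majorant_nonneg)
  also have "\<dots> = (\<Sum>d\<le>a. h d) + (\<Sum>d\<in>{a<..a+M}. h d)"
    by (intro sum.union_disjoint) auto
  finally have split: "(\<Sum>d<M. h d) \<le> (\<Sum>d\<le>a. h d) + (\<Sum>d\<in>{a<..a+M}. h d)" .
  have "(\<Sum>d\<le>a. h d) \<le> (\<Sum>d\<le>a. (real P)^2)"
    by (intro sum_mono) (simp add: h_def dirichlet_majorant_def)
  also have "\<dots> \<le> (real M / real P + 2) * (real P)^2"
    using a by (simp add: mult_right_mono)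
  also have "\<dots> = real M * real P + 2 * (real P)^2"
    using P by (simp add: field_simps power2_eq_square)
  finally have near: "(\<Sum>d\<le>a. h d) \<le> real M * real P + 2 * (real P)^2" .
  have "(\<Sum>d\<in>{a<..a+M}. h d) \<le> (\<Sum>d\<in>{a<..a+M}. (real M)^2 * (1 / (real d)^2))"
    by (intro sum_mono) (auto simp: h_def dirichlet_majorant_def power_divide)
  also have "\<dots> \<le> (real M)^2 * (1 / real a)"
  proof -
    have "0 \<le> 1 / real (a + M)" by simp
    then have "(\<Sum>d\<in>{a<..a+M}. 1 / (real d)^2) \<le> 1 / real a"
      using sum_inverse_squares_le[OF a0, of M] by linarith
    then show ?thesis unfolding sum_distrib_left[symmetric] by (rule mult_left_mono) simp
  qed
  also have "\<dots> \<le> (real M)^2 * (1 / (real M / real P))"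
    using a a0 M P by (intro mult_left_mono divide_left_mono) auto
  also have "\<dots> = real M * real P"
    using M P by (simp add: field_simps power2_eq_square)
  finally have far: "(\<Sum>d\<in>{a<..a+M}. h d) \<le> real M * real P" .
  show ?thesis using split near far unfolding h_def by linarith
qed

lemma sum_cell_weight_le:
  assumes "0 < M" "0 < P"
  shows "(\<Sum>j<M. cell_weight M P j) \<le> 4 * real P * (real P + real M)"
proof -
  have "(\<Sum>j<M. cell_weight M P j)
      \<le> (\<Sum>j<M. dirichlet_majorant M P j + dirichlet_majorant M P (M - Suc j))"
    by (intro sum_mono)
      (auto simp: cell_weight_def min_def dirichlet_majorant_nonneg add_increasing add_increasing2)
  also have "\<dots> = 2 * (\<Sum>d<M. dirichlet_majorant M P d)"
    by (simp add: sum.distrib sum.nat_diff_reindex[where g = "dirichlet_majorant M P"])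
  also have "\<dots> \<le> 4 * real P * (real P + real M)"
    using sum_dirichlet_majorant_le[OF assms] by (simp add: algebra_simps power2_eq_square)
  finally show ?thesis .
qed

section \<open>Counting points of the torus in cells\<close>

lemma lattice_dist_le: "lattice_dist v \<le> norm (v - (of_int m, of_int k))"
  unfolding lattice_dist_def by (rule cInf_lower) (auto intro: bdd_belowI[where m = 0])

lemma card_same_cell_le:
  fixes \<xi> :: "'r \<Rightarrow> real \<times> real"
  assumes I: "finite I" and M: "0 < M" and \<delta>: "sqrt 2 / real M \<le> \<delta>"
    and K: "\<And>\<alpha>. real (card {r\<in>I. lattice_dist (\<xi> r - \<alpha>) \<le> \<delta>}) \<le> K"
  shows "real (card {r'\<in>I. (cell M (fst (\<xi> r - \<xi> r')), cell M (snd (\<xi> r - \<xi> r'))) = c}) \<le> K"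
proof -
  define \<alpha> where "\<alpha> = \<xi> r - (real (fst c) / real M, real (snd c) / real M)"
  have "lattice_dist (\<xi> r' - \<alpha>) \<le> \<delta>"
    if "cell M (fst (\<xi> r - \<xi> r')) = fst c" "cell M (snd (\<xi> r - \<xi> r')) = snd c" for r'
  proof -
    define \<theta> where "\<theta> = \<xi> r - \<xi> r'"
    define u where "u = real (fst c) / real M - frac (fst \<theta>)"
    define v where "v = real (snd c) / real M - frac (snd \<theta>)"
    have "\<bar>u\<bar> \<le> 1 / real M" "\<bar>v\<bar> \<le> 1 / real M"
      using dist_cell_le[OF M, of "fst \<theta>"] dist_cell_le[OF M, of "snd \<theta>"] that
      by (simp_all add: u_def v_def \<theta>_def)
    then have uv: "u^2 \<le> (1 / real M)^2" "v^2 \<le> (1 / real M)^2"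
      by (simp_all add: power2_le_iff_abs_le)
    have "\<xi> r' - \<alpha> - (of_int (- \<lfloor>fst \<theta>\<rfloor>), of_int (- \<lfloor>snd \<theta>\<rfloor>)) = (u, v)"
      unfolding u_def v_def \<alpha>_def \<theta>_def frac_def by (simp add: prod_eq_iff)
    then have "lattice_dist (\<xi> r' - \<alpha>) \<le> norm (u, v)"
      using lattice_dist_le[of "\<xi> r' - \<alpha>"] by metis
    also have "\<dots> = sqrt (u^2 + v^2)"
      by (simp add: norm_Pair)
    also have "\<dots> \<le> sqrt ((1 / real M)^2 + (1 / real M)^2)"
      using uv by simp
    also have "\<dots> = sqrt 2 / real M"
      by (simp add: real_sqrt_divide power_divide)
    finally show ?thesis using \<delta> by simp
  qed
  then have "{r'\<in>I. (cell M (fst (\<xi> r - \<xi> r')), cell M (snd (\<xi> r - \<xi> r'))) = c}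
      \<subseteq> {r'\<in>I. lattice_dist (\<xi> r' - \<alpha>) \<le> \<delta>}"
    by auto
  then have "card {r'\<in>I. (cell M (fst (\<xi> r - \<xi> r')), cell M (snd (\<xi> r - \<xi> r'))) = c}
      \<le> card {r'\<in>I. lattice_dist (\<xi> r' - \<alpha>) \<le> \<delta>}"
    using I by (intro card_mono) auto
  then show ?thesis using K[of \<alpha>] by (meson of_nat_le_iff order_trans)
qed

lemma sum_kernel_row_le:
  fixes \<xi> :: "'r \<Rightarrow> real \<times> real"
  assumes I: "finite I" and M: "0 < M" and \<delta>: "sqrt 2 / real M \<le> \<delta>"
    and K: "\<And>\<alpha>. real (card {r\<in>I. lattice_dist (\<xi> r - \<alpha>) \<le> \<delta>}) \<le> K"
  shows "(\<Sum>r'\<in>I. (cmod (dirichlet_kernel P (fst (\<xi> r - \<xi> r'))))^2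
                  * (cmod (dirichlet_kernel P (snd (\<xi> r - \<xi> r'))))^2)
     \<le> K * (\<Sum>j<M. cell_weight M P j)^2"
proof -
  define cl where "cl r' = (cell M (fst (\<xi> r - \<xi> r')), cell M (snd (\<xi> r - \<xi> r')))" for r'
  define w where "w c = cell_weight M P (fst c) * cell_weight M P (snd c)" for c
  define T where "T = {..<M} \<times> {..<M}"
  have "(\<Sum>r'\<in>I. (cmod (dirichlet_kernel P (fst (\<xi> r - \<xi> r'))))^2
                 * (cmod (dirichlet_kernel P (snd (\<xi> r - \<xi> r'))))^2)
      \<le> (\<Sum>r'\<in>I. w (cl r'))"
    unfolding w_def cl_def
    by (intro sum_mono mult_mono)
      (simp_all add: cell_weight_nonneg norm_dirichlet_kernel_sq_le_cell_weight[OF M])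
  also have "\<dots> = (\<Sum>c\<in>T. \<Sum>r'\<in>{r'\<in>I. cl r' = c}. w (cl r'))"
    by (rule sum.group[symmetric]) (auto simp: I T_def cl_def cell_less[OF M])
  also have "\<dots> = (\<Sum>c\<in>T. real (card {r'\<in>I. cl r' = c}) * w c)"
    by simp
  also have "\<dots> \<le> (\<Sum>c\<in>T. K * w c)"
    unfolding cl_def
    by (intro sum_mono mult_right_mono card_same_cell_le[OF I M \<delta> K])
      (simp add: w_def cell_weight_nonneg)
  also have "\<dots> = K * (\<Sum>c\<in>T. w c)"
    by (simp add: sum_distrib_left)
  also have "(\<Sum>c\<in>T. w c) = (\<Sum>j<M. cell_weight M P j)^2"
    unfolding T_def w_def power2_eq_square sum_product sum.cartesian_product
    by (intro sum.cong) auto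
  finally show ?thesis .
qed

section \<open>Duality and Hermitian forms\<close>

lemma large_sieve_duality:
  fixes \<phi> :: "'n \<Rightarrow> 'r \<Rightarrow> complex" and b :: "'n \<Rightarrow> complex"
  assumes B: "0 \<le> B"
    and dual: "\<And>c. (\<Sum>n\<in>N. (cmod (\<Sum>r\<in>I. c r * \<phi> n r))^2) \<le> B * (\<Sum>r\<in>I. (cmod (c r))^2)"
  shows "(\<Sum>r\<in>I. (cmod (\<Sum>n\<in>N. b n * \<phi> n r))^2) \<le> B * (\<Sum>n\<in>N. (cmod (b n))^2)"
proof -
  define T where "T r = (\<Sum>n\<in>N. b n * \<phi> n r)" for r
  define V where "V n = (\<Sum>r\<in>I. cnj (T r) * \<phi> n r)" for n
  define U where "U = (\<Sum>r\<in>I. (cmod (T r))^2)"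
  define Z where "Z = (\<Sum>n\<in>N. (cmod (b n))^2)"
  have U0: "0 \<le> U" and Z0: "0 \<le> Z" by (simp_all add: U_def Z_def sum_nonneg)
  have "complex_of_real U = (\<Sum>r\<in>I. cnj (T r) * T r)"
    unfolding U_def of_real_sum complex_norm_square by (simp add: mult.commute)
  also have "\<dots> = (\<Sum>n\<in>N. b n * V n)"
    unfolding T_def V_def sum_distrib_left by (subst sum.swap) (simp add: mult_ac)
  finally have "U = cmod (\<Sum>n\<in>N. b n * V n)"
    using U0 by (metis norm_of_real abs_of_nonneg)
  also have "\<dots> \<le> (\<Sum>n\<in>N. cmod (b n) * cmod (V n))"
    by (rule order_trans[OF norm_sum]) (simp add: norm_mult)
  finally have "U \<le> (\<Sum>n\<in>N. cmod (b n) * cmod (V n))" .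
  then have "U^2 \<le> (\<Sum>n\<in>N. cmod (b n) * cmod (V n))^2"
    using U0 by (intro power_mono) auto
  also have "\<dots> \<le> Z * (\<Sum>n\<in>N. (cmod (V n))^2)"
    unfolding Z_def by (rule Cauchy_Schwarz_ineq_sum)
  also have "\<dots> \<le> Z * (B * U)"
    using dual[of "\<lambda>r. cnj (T r)"] Z0 unfolding V_def U_def by (intro mult_left_mono) auto
  finally have "U * U \<le> (B * Z) * U" by (simp add: power2_eq_square mult_ac)
  then have "U \<le> B * Z"
    using U0 B Z0 by (cases "U = 0") (auto simp: mult_le_cancel_right)
  then show ?thesis unfolding U_def Z_def T_def .
qed

lemma sum_norm_sq_sum_outer_products:
  fixes c :: "'r \<Rightarrow> complex" and u :: "'r \<Rightarrow> 'j \<Rightarrow> complex"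
  shows "complex_of_real (\<Sum>k\<in>J. \<Sum>j\<in>J. (cmod (\<Sum>r\<in>I. c r * (u r j * cnj (u r k))))^2)
     = (\<Sum>r\<in>I. \<Sum>r'\<in>I. c r * cnj (c r')
          * complex_of_real ((cmod (\<Sum>j\<in>J. u r j * cnj (u r' j)))^2))"
proof -
  have "complex_of_real (\<Sum>k\<in>J. \<Sum>j\<in>J. (cmod (\<Sum>r\<in>I. c r * (u r j * cnj (u r k))))^2)
     = (\<Sum>k\<in>J. \<Sum>j\<in>J. \<Sum>r\<in>I. \<Sum>r'\<in>I.
          c r * cnj (c r') * ((u r j * cnj (u r' j)) * (cnj (u r k) * u r' k)))"
    unfolding of_real_sum complex_norm_square by (simp add: cnj_sum sum_product mult_ac)
  also have "\<dots> = (\<Sum>r\<in>I. \<Sum>r'\<in>I. \<Sum>k\<in>J. \<Sum>j\<in>J.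
          c r * cnj (c r') * ((u r j * cnj (u r' j)) * (cnj (u r k) * u r' k)))"
    by (simp only: sum.swap[of _ J I])
  also have "\<dots> = (\<Sum>r\<in>I. \<Sum>r'\<in>I. c r * cnj (c r')
          * complex_of_real ((cmod (\<Sum>j\<in>J. u r j * cnj (u r' j)))^2))"
  proof (intro sum.cong refl)
    fix r r'
    have "complex_of_real ((cmod (\<Sum>j\<in>J. u r j * cnj (u r' j)))^2)
        = (\<Sum>j\<in>J. u r j * cnj (u r' j)) * (\<Sum>k\<in>J. cnj (u r k) * u r' k)"
      unfolding complex_norm_square by (simp add: cnj_sum mult.commute)
    also have "\<dots> = (\<Sum>k\<in>J. \<Sum>j\<in>J. (u r j * cnj (u r' j)) * (cnj (u r k) * u r' k))"
      by (subst sum.swap) (rule sum_product)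
    finally show "(\<Sum>k\<in>J. \<Sum>j\<in>J. c r * cnj (c r') * ((u r j * cnj (u r' j)) * (cnj (u r k) * u r' k)))
        = c r * cnj (c r') * complex_of_real ((cmod (\<Sum>j\<in>J. u r j * cnj (u r' j)))^2)"
      by (simp add: sum_distrib_left)
  qed
  finally show ?thesis .
qed

lemma hermitian_form_le_row_sums:
  fixes c :: "'r \<Rightarrow> complex" and G :: "'r \<Rightarrow> 'r \<Rightarrow> real"
  assumes sym: "\<And>r r'. G r r' = G r' r" and nonneg: "\<And>r r'. 0 \<le> G r r'"
  shows "Re (\<Sum>r\<in>I. \<Sum>r'\<in>I. c r * cnj (c r') * complex_of_real (G r r'))
     \<le> (\<Sum>r\<in>I. (cmod (c r))^2 * (\<Sum>r'\<in>I. G r r'))"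
proof -
  have swap: "(\<Sum>r\<in>I. \<Sum>r'\<in>I. (cmod (c r'))^2 * G r r') = (\<Sum>r\<in>I. \<Sum>r'\<in>I. (cmod (c r))^2 * G r r')"
    by (subst sum.swap) (simp add: sym)
  have "Re (\<Sum>r\<in>I. \<Sum>r'\<in>I. c r * cnj (c r') * complex_of_real (G r r'))
      \<le> cmod (\<Sum>r\<in>I. \<Sum>r'\<in>I. c r * cnj (c r') * complex_of_real (G r r'))"
    by (rule complex_Re_le_cmod)
  also have "\<dots> \<le> (\<Sum>r\<in>I. \<Sum>r'\<in>I. cmod (c r) * cmod (c r') * G r r')"
    by (rule order_trans[OF norm_sum sum_mono[OF order_trans[OF norm_sum]]])
      (simp add: norm_mult nonneg)
  also have "\<dots> \<le> (\<Sum>r\<in>I. \<Sum>r'\<in>I. ((cmod (c r))^2 * G r r' + (cmod (c r'))^2 * G r r') / 2)"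
  proof (intro sum_mono)
    fix r r'
    show "cmod (c r) * cmod (c r') * G r r' \<le> ((cmod (c r))^2 * G r r' + (cmod (c r'))^2 * G r r') / 2"
      using mult_right_mono[OF sum_squares_bound[of "cmod (c r)" "cmod (c r')"] nonneg[of r r']]
      by (simp add: algebra_simps)
  qed
  also have "\<dots> = (\<Sum>r\<in>I. \<Sum>r'\<in>I. (cmod (c r))^2 * G r r')"
    using swap by (simp add: sum.distrib sum_divide_distrib[symmetric])
  finally show ?thesis by (simp add: sum_distrib_left)
qed

section \<open>The large sieve on the torus\<close>

lemma sum_norm_sq_le_shifted_square:
  assumes Dn: "Dn \<subseteq> {- int L..int L} \<times> {- int L..int L}"
    and k: "k \<in> {int L..int (2 * L)} \<times> {int L..int (2 * L)}"
  shows "(\<Sum>n\<in>Dn. (cmod (\<Sum>r\<in>I. c r * e_dot n (\<xi> r)))^2)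
    \<le> (\<Sum>j\<in>{0..int (3 * L)} \<times> {0..int (3 * L)}.
          (cmod (\<Sum>r\<in>I. c r * (e_dot j (\<xi> r) * cnj (e_dot k (\<xi> r)))))^2)"
proof -
  have shift: "e_dot (n + k) t * cnj (e_dot k t) = e_dot n t" for n t
    using complex_norm_square[of "e_dot k t"] by (simp add: e_dot_add mult.assoc)
  have "inj_on (\<lambda>n. n + k) Dn" by (simp add: inj_on_def)
  then have "(\<Sum>n\<in>Dn. (cmod (\<Sum>r\<in>I. c r * e_dot n (\<xi> r)))^2)
      = (\<Sum>j\<in>(\<lambda>n. n + k) ` Dn. (cmod (\<Sum>r\<in>I. c r * (e_dot j (\<xi> r) * cnj (e_dot k (\<xi> r)))))^2)"
    by (simp add: sum.reindex shift)
  also have "\<dots> \<le> (\<Sum>j\<in>{0..int (3 * L)} \<times> {0..int (3 * L)}.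
          (cmod (\<Sum>r\<in>I. c r * (e_dot j (\<xi> r) * cnj (e_dot k (\<xi> r)))))^2)"
    using k by (intro sum_mono2) (auto dest!: subsetD[OF Dn])
  finally show ?thesis .
qed

lemma dual_form_le_kernel_rows:
  fixes \<xi> :: "'r \<Rightarrow> real \<times> real" and c :: "'r \<Rightarrow> complex"
  assumes Dn: "Dn \<subseteq> {- int L..int L} \<times> {- int L..int L}"
  defines "G r r' \<equiv> (cmod (dirichlet_kernel (3 * L + 1) (fst (\<xi> r - \<xi> r'))))^2
                    * (cmod (dirichlet_kernel (3 * L + 1) (snd (\<xi> r - \<xi> r'))))^2"
  shows "(real (L + 1))^2 * (\<Sum>n\<in>Dn. (cmod (\<Sum>r\<in>I. c r * e_dot n (\<xi> r)))^2)
    \<le> (\<Sum>r\<in>I. (cmod (c r))^2 * (\<Sum>r'\<in>I. G r r'))"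
proof -
  define Box where "Box = {0..int (3 * L)} \<times> {0..int (3 * L)}"
  define Shifts where "Shifts = {int L..int (2 * L)} \<times> {int L..int (2 * L)}"
  define W where "W j k = (\<Sum>r\<in>I. c r * (e_dot j (\<xi> r) * cnj (e_dot k (\<xi> r))))" for j k
  have "card Shifts = (L + 1)^2"
    by (simp add: Shifts_def power2_eq_square nat_add_distrib)
  then have "(real (L + 1))^2 * (\<Sum>n\<in>Dn. (cmod (\<Sum>r\<in>I. c r * e_dot n (\<xi> r)))^2)
      = (\<Sum>k\<in>Shifts. \<Sum>n\<in>Dn. (cmod (\<Sum>r\<in>I. c r * e_dot n (\<xi> r)))^2)"
    by simp
  also have "\<dots> \<le> (\<Sum>k\<in>Shifts. \<Sum>j\<in>Box. (cmod (W j k))^2)"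
    unfolding W_def Box_def Shifts_def by (intro sum_mono sum_norm_sq_le_shifted_square[OF Dn])
  also have "\<dots> \<le> (\<Sum>k\<in>Box. \<Sum>j\<in>Box. (cmod (W j k))^2)"
    by (intro sum_mono2) (auto simp: Box_def Shifts_def sum_nonneg)
  also have "\<dots> = Re (\<Sum>r\<in>I. \<Sum>r'\<in>I. c r * cnj (c r') * complex_of_real (G r r'))"
  proof -
    have box: "(\<Sum>j\<in>Box. e_dot j t)
        = dirichlet_kernel (3 * L + 1) (fst t) * dirichlet_kernel (3 * L + 1) (snd t)" for t
      unfolding Box_def using sum_e_dot_square[where m = "3 * L" and t = t] by simp
    have gram: "(cmod (\<Sum>j\<in>Box. e_dot j (\<xi> r) * cnj (e_dot j (\<xi> r'))))^2 = G r r'" for r r'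
      by (simp add: e_dot_mult_cnj box norm_mult power_mult_distrib G_def)
    have "complex_of_real (\<Sum>k\<in>Box. \<Sum>j\<in>Box. (cmod (W j k))^2)
        = (\<Sum>r\<in>I. \<Sum>r'\<in>I. c r * cnj (c r') * complex_of_real (G r r'))"
      unfolding W_def sum_norm_sq_sum_outer_products gram ..
    from arg_cong[OF this, of Re] show ?thesis by (simp only: Re_complex_of_real)
  qed
  also have "\<dots> \<le> (\<Sum>r\<in>I. (cmod (c r))^2 * (\<Sum>r'\<in>I. G r r'))"
  proof (rule hermitian_form_le_row_sums)
    fix r r'
    have "\<xi> r' - \<xi> r = - (\<xi> r - \<xi> r')" by simp
    then show "G r r' = G r' r"
      unfolding G_def by (metis fst_uminus snd_uminus norm_dirichlet_kernel_uminus)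
  qed (simp add: G_def)
  finally show ?thesis .
qed

lemma dual_large_sieve_torus:
  fixes \<xi> :: "'r \<Rightarrow> real \<times> real" and c :: "'r \<Rightarrow> complex"
  assumes I: "finite I" and Dn: "Dn \<subseteq> {- int L..int L} \<times> {- int L..int L}"
    and M: "0 < M" and \<delta>: "sqrt 2 / real M \<le> \<delta>"
    and K: "\<And>\<alpha>. real (card {r\<in>I. lattice_dist (\<xi> r - \<alpha>) \<le> \<delta>}) \<le> K"
  shows "(\<Sum>n\<in>Dn. (cmod (\<Sum>r\<in>I. c r * e_dot n (\<xi> r)))^2)
    \<le> 144 * K * (real (3 * L + 1) + real M)^2 * (\<Sum>r\<in>I. (cmod (c r))^2)"
proof -
  define P where "P = 3 * L + 1"
  define A where "A = 144 * K * (real P + real M)^2"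
  have K0: "0 \<le> K" using K[of 0] by (meson of_nat_0_le_iff order_trans)
  have row: "(\<Sum>r'\<in>I. (cmod (dirichlet_kernel P (fst (\<xi> r - \<xi> r'))))^2
                   * (cmod (dirichlet_kernel P (snd (\<xi> r - \<xi> r'))))^2) \<le> (real (L + 1))^2 * A" for r
  proof -
    have "(\<Sum>r'\<in>I. (cmod (dirichlet_kernel P (fst (\<xi> r - \<xi> r'))))^2
                   * (cmod (dirichlet_kernel P (snd (\<xi> r - \<xi> r'))))^2)
        \<le> K * (\<Sum>j<M. cell_weight M P j)^2"
      by (rule sum_kernel_row_le[OF I M \<delta> K])
    also have "\<dots> \<le> K * (4 * real P * (real P + real M))^2"
      using sum_cell_weight_le[OF M, of P] K0
      by (intro mult_left_mono power_mono) (auto simp: P_def sum_nonneg cell_weight_nonneg)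
    also have "\<dots> \<le> K * (4 * (3 * real (L + 1)) * (real P + real M))^2"
      using K0 by (intro mult_left_mono power_mono) (auto simp: P_def)
    also have "\<dots> = (real (L + 1))^2 * A"
      by (simp add: A_def power2_eq_square algebra_simps)
    finally show ?thesis .
  qed
  have "(real (L + 1))^2 * (\<Sum>n\<in>Dn. (cmod (\<Sum>r\<in>I. c r * e_dot n (\<xi> r)))^2)
      \<le> (\<Sum>r\<in>I. (cmod (c r))^2 * (\<Sum>r'\<in>I. (cmod (dirichlet_kernel P (fst (\<xi> r - \<xi> r'))))^2
                                     * (cmod (dirichlet_kernel P (snd (\<xi> r - \<xi> r'))))^2))"
    unfolding P_def by (rule dual_form_le_kernel_rows[OF Dn])
  also have "\<dots> \<le> (\<Sum>r\<in>I. (cmod (c r))^2 * ((real (L + 1))^2 * A))"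
    by (intro sum_mono mult_left_mono row) simp
  also have "\<dots> = (real (L + 1))^2 * (A * (\<Sum>r\<in>I. (cmod (c r))^2))"
    unfolding sum_distrib_left by (simp add: mult_ac)
  finally show ?thesis
    unfolding A_def P_def by (rule mult_left_le_imp_le) simp
qed

lemma large_sieve_torus:
  fixes \<xi> :: "'r \<Rightarrow> real \<times> real" and b :: "int \<times> int \<Rightarrow> complex"
  assumes I: "finite I" and Dn: "Dn \<subseteq> {- int L..int L} \<times> {- int L..int L}"
    and M: "0 < M" and \<delta>: "sqrt 2 / real M \<le> \<delta>"
    and K: "\<And>\<alpha>. real (card {r\<in>I. lattice_dist (\<xi> r - \<alpha>) \<le> \<delta>}) \<le> K"
  shows "(\<Sum>r\<in>I. (cmod (\<Sum>n\<in>Dn. b n * e_dot n (\<xi> r)))^2)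
    \<le> 144 * K * (real (3 * L + 1) + real M)^2 * (\<Sum>n\<in>Dn. (cmod (b n))^2)"
proof (rule large_sieve_duality[where \<phi> = "\<lambda>n r. e_dot n (\<xi> r)"])
  show "0 \<le> 144 * K * (real (3 * L + 1) + real M)^2"
    using K[of 0] by (simp add: order_trans[OF of_nat_0_le_iff])
qed (rule dual_large_sieve_torus[OF I Dn M \<delta> K])

lemma disc_subset_square:
  fixes n :: "int \<times> int"
  assumes n: "of_int ((fst n)^2 + (snd n)^2) \<le> X"
  defines "L \<equiv> nat \<lfloor>sqrt X\<rfloor>"
  shows "n \<in> {- int L..int L} \<times> {- int L..int L}"
proof -
  have "(of_int (fst n))^2 + (of_int (snd n))^2 \<le> X"
    using n by simp
  moreover have "0 \<le> (real_of_int (fst n))^2" "0 \<le> (real_of_int (snd n))^2"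
    by simp_all
  ultimately have "(of_int (fst n))^2 \<le> X" "(of_int (snd n))^2 \<le> X"
    by linarith+
  moreover have "\<bar>x\<bar> \<le> int L" if "(of_int x)^2 \<le> X" for x :: int
  proof -
    have "of_int \<bar>x\<bar> = sqrt ((of_int x)^2)" by simp
    also have "\<dots> \<le> sqrt X" using that by (rule real_sqrt_le_mono)
    moreover have "0 \<le> X" using that zero_le_power2[of "real_of_int x"] by linarith
    ultimately show ?thesis by (simp add: L_def le_floor_iff)
  qed
  ultimately have "\<bar>fst n\<bar> \<le> int L" "\<bar>snd n\<bar> \<le> int L" by blast+
  then show ?thesis by (cases n) (auto simp: abs_le_iff)
qed

lemma cell_number_bounds:
  assumes \<Delta>: "0 < \<Delta>" "\<Delta> \<le> 1/2"
  defines "M \<equiv> nat \<lceil>sqrt (2 / \<Delta>)\<rceil>"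
  shows "0 < M" and "sqrt 2 / real M \<le> sqrt \<Delta>" and "(real M)^2 \<le> 8 * (1 / \<Delta>)"
proof -
  define s where "s = sqrt (2 / \<Delta>)"
  have s: "2 \<le> s" unfolding s_def using \<Delta> by (intro real_le_rsqrt) (simp add: field_simps)
  have M: "s \<le> real M" "real M \<le> 2 * s"
    unfolding M_def s_def[symmetric] using ceiling_correct[of s] s by (simp_all add: of_nat_nat)
  then show "0 < M" using s by linarith
  have "sqrt 2 / real M \<le> sqrt 2 / s" using M s by (intro divide_left_mono) auto
  also have "\<dots> = sqrt \<Delta>" unfolding s_def using \<Delta> by (simp add: real_sqrt_divide)
  finally show "sqrt 2 / real M \<le> sqrt \<Delta>" .
  have "(real M)^2 \<le> (2 * s)^2" using M by (intro power_mono) auto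
  also have "\<dots> = 8 * (1 / \<Delta>)" using \<Delta> by (simp add: s_def power_mult_distrib)
  finally show "(real M)^2 \<le> 8 * (1 / \<Delta>)" .
qed

lemma sq_add_le: "((a::real) + b)^2 \<le> 2 * a^2 + 2 * b^2"
  using sum_squares_bound[of a b] by (simp add: power2_sum)

lemma frequency_square_bound:
  assumes "2 \<le> X"
  shows "(3 * real (nat \<lfloor>sqrt X\<rfloor>) + 1)^2 \<le> 27 * X"
proof -
  have "real (nat \<lfloor>sqrt X\<rfloor>) \<le> sqrt X" using assms by simp
  then have "(real (nat \<lfloor>sqrt X\<rfloor>))^2 \<le> X"
    using power_mono[of _ "sqrt X" 2] assms by simp
  then show ?thesis
    using sq_add_le[of "3 * real (nat \<lfloor>sqrt X\<rfloor>)" 1] assms by (simp add: power_mult_distrib)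
qed

lemma large_sieve_torus_Delta:
  fixes \<xi> :: "'r \<Rightarrow> real \<times> real" and b :: "int \<times> int \<Rightarrow> complex"
  assumes I: "finite I" and X: "2 \<le> X"
    and Dn: "Dn \<subseteq> {n. of_int ((fst n)^2 + (snd n)^2) \<le> X}"
    and \<Delta>: "0 < \<Delta>" "\<Delta> \<le> 1/2"
    and K: "\<And>\<alpha>. real (card {r\<in>I. lattice_dist (\<xi> r - \<alpha>) \<le> sqrt \<Delta>}) \<le> K"
  shows "(\<Sum>r\<in>I. (cmod (\<Sum>n\<in>Dn. b n * e_dot n (\<xi> r)))^2)
    \<le> 7776 * K * (X + 1 / \<Delta>) * (\<Sum>n\<in>Dn. (cmod (b n))^2)"
proof -
  define L where "L = nat \<lfloor>sqrt X\<rfloor>"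
  define M where "M = nat \<lceil>sqrt (2 / \<Delta>)\<rceil>"
  note M = cell_number_bounds[OF \<Delta>, folded M_def]
  have K0: "0 \<le> K" using K[of 0] by (meson of_nat_0_le_iff order_trans)
  have "0 < 1 / \<Delta>" using \<Delta> by simp
  then have "(3 * real L + 1 + real M)^2 \<le> 54 * X + 54 * (1 / \<Delta>)"
    using sq_add_le[of "3 * real L + 1" "real M"] frequency_square_bound[OF X] M(3)
    unfolding L_def by linarith
  then have "(real (3 * L + 1) + real M)^2 \<le> 54 * (X + 1 / \<Delta>)"
    by (simp add: distrib_left add_ac)
  from mult_left_mono[OF this, of "144 * K"]
  have bound: "144 * K * (real (3 * L + 1) + real M)^2 \<le> 7776 * K * (X + 1 / \<Delta>)"
    using K0 by (simp add: mult_ac)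
  have "Dn \<subseteq> {- int L..int L} \<times> {- int L..int L}"
    using Dn disc_subset_square unfolding L_def by blast
  then have "(\<Sum>r\<in>I. (cmod (\<Sum>n\<in>Dn. b n * e_dot n (\<xi> r)))^2)
      \<le> 144 * K * (real (3 * L + 1) + real M)^2 * (\<Sum>n\<in>Dn. (cmod (b n))^2)"
    by (rule large_sieve_torus[OF I _ M(1,2) K])
  also have "\<dots> \<le> 7776 * K * (X + 1 / \<Delta>) * (\<Sum>n\<in>Dn. (cmod (b n))^2)"
    by (rule mult_right_mono[OF bound]) (simp add: sum_nonneg)
  finally show ?thesis .
qed

section \<open>Gaussian integers\<close>

definition gauss :: "int \<times> int \<Rightarrow> complex" where
  "gauss n = Complex (of_int (fst n)) (of_int (snd n))"

lemma inj_on_gauss: "inj_on gauss A"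
  unfolding inj_on_def gauss_def by (auto simp: prod_eq_iff)

lemma gint_imp_gauss: "gint z \<Longrightarrow> z = gauss (\<lfloor>Re z\<rfloor>, \<lfloor>Im z\<rfloor>)"
  unfolding gint_def gauss_def by (auto simp: complex_eq_iff elim!: Ints_cases)

lemma gint_disc_eq_image:
  "{z. gint z \<and> gnorm z \<le> X} = gauss ` {n. of_int ((fst n)^2 + (snd n)^2) \<le> X}"
proof -
  have gnorm_gauss: "gnorm (gauss n) = of_int ((fst n)^2 + (snd n)^2)" for n
    by (simp add: gnorm_def gauss_def)
  show ?thesis
  proof (intro equalityI subsetI)
    fix z assume "z \<in> {z. gint z \<and> gnorm z \<le> X}"
    then show "z \<in> gauss ` {n. of_int ((fst n)^2 + (snd n)^2) \<le> X}"
      using gint_imp_gauss[of z] gnorm_gauss[of "(\<lfloor>Re z\<rfloor>, \<lfloor>Im z\<rfloor>)"] by force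
  qed (auto simp: gnorm_def gint_def gauss_def)
qed

lemma finite_gint_cball: "finite {z. gint z \<and> cmod z \<le> r}"
proof -
  have "{z. gint z \<and> cmod z \<le> r} \<subseteq> {z. gint z \<and> gnorm z \<le> r^2}"
    by (auto simp: gnorm_def cmod_power2[symmetric] intro!: power_mono)
  moreover have "finite {n :: int \<times> int. of_int ((fst n)^2 + (snd n)^2) \<le> r^2}"
  proof (rule finite_subset)
    show "{n :: int \<times> int. of_int ((fst n)^2 + (snd n)^2) \<le> r^2}
        \<subseteq> {- int (nat \<lfloor>sqrt (r^2)\<rfloor>)..int (nat \<lfloor>sqrt (r^2)\<rfloor>)}
          \<times> {- int (nat \<lfloor>sqrt (r^2)\<rfloor>)..int (nat \<lfloor>sqrt (r^2)\<rfloor>)}"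
      using disc_subset_square by blast
  qed simp
  ultimately show ?thesis
    unfolding gint_disc_eq_image by (meson finite_imageI finite_subset)
qed

lemma gint_diff_mult: "gint a \<Longrightarrow> gint b \<Longrightarrow> gint c \<Longrightarrow> gint (a - b * c)"
  unfolding gint_def by auto

text \<open>Reducing each residue to the representative \<open>a - q \<kappa>(a/q)\<close>, with \<open>\<kappa>\<close> rounding both
  coordinates, maps a reduced residue system injectively into the disc of radius \<open>|q|\<close>.\<close>
lemma finite_reduced_residue_system:
  assumes q: "gint q" "q \<noteq> 0" and R: "reduced_residue_system A q"
  shows "finite A"
proof -
  define \<kappa> where "\<kappa> w = Complex (of_int (round (Re w))) (of_int (round (Im w)))" for w
  define \<rho> where "\<rho> a = a - q * \<kappa> (a / q)" for a
  have g\<kappa>: "gint (\<kappa> w)" for w by (simp add: \<kappa>_def gint_def)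
  have "inj_on \<rho> A"
  proof (rule inj_onI)
    fix a b assume ab: "a \<in> A" "b \<in> A" and "\<rho> a = \<rho> b"
    then have "a - b = q * (\<kappa> (a / q) - \<kappa> (b / q))" by (simp add: \<rho>_def algebra_simps)
    then have "gcong a b q"
      using g\<kappa>[of "a / q"] g\<kappa>[of "b / q"] unfolding gcong_def gdvd_def
      by (intro exI[of _ "\<kappa> (a / q) - \<kappa> (b / q)"]) (auto simp: gint_def)
    then show "a = b" using R ab unfolding reduced_residue_system_def by blast
  qed
  moreover have "\<rho> ` A \<subseteq> {z. gint z \<and> cmod z \<le> cmod q}"
  proof safe
    fix a assume "a \<in> A"
    then have "gint a" using R unfolding reduced_residue_system_def by blast
    then show "gint (\<rho> a)" unfolding \<rho>_def by (intro gint_diff_mult q(1) g\<kappa>)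
    have "cmod (a / q - \<kappa> (a / q)) \<le> \<bar>Re (a / q - \<kappa> (a / q))\<bar> + \<bar>Im (a / q - \<kappa> (a / q))\<bar>"
      by (rule cmod_le)
    also have "\<dots> \<le> 1/2 + 1/2"
      unfolding \<kappa>_def using of_int_round_abs_le[of "Re (a / q)"] of_int_round_abs_le[of "Im (a / q)"]
      by (intro add_mono) (simp_all add: abs_minus_commute)
    finally have "cmod q * cmod (a / q - \<kappa> (a / q)) \<le> cmod q * 1"
      by (intro mult_left_mono) simp_all
    moreover have "\<rho> a = q * (a / q - \<kappa> (a / q))" using q by (simp add: \<rho>_def algebra_simps)
    ultimately show "cmod (\<rho> a) \<le> cmod q" by (simp add: norm_mult)
  qed
  ultimately show ?thesis
    using finite_gint_cball by (metis finite_imageD finite_subset)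
qed

lemma e_Re_gauss_mult_div: "e (Re (gauss n * a / q)) = e_dot n (xi a q)"
proof -
  have xi: "xi a q = (Re (a / q), - Im (a / q))"
    by (simp add: xi_def gnorm_def Re_divide Im_divide minus_divide_left algebra_simps
        del: divide_minus_left)
  have "Re (gauss n * w) = of_int (fst n) * Re w - of_int (snd n) * Im w" for w
    by (simp add: gauss_def)
  from this[of "a / q"]
  have "Re (gauss n * a / q) = of_int (fst n) * Re (a / q) - of_int (snd n) * Im (a / q)"
    by (simp only: times_divide_eq_right)
  then show ?thesis by (simp add: e_dot_def xi)
qed

lemma card_le_Kfun:
  assumes "finite (Sigma S R)"
  shows "real (card {r \<in> Sigma S R. lattice_dist (xi (snd r) (fst r) - \<alpha>) \<le> sqrt \<Delta>})
    \<le> Kfun S R \<Delta>"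
proof -
  define A where "A \<beta> = {(a, q). q \<in> S \<and> a \<in> R q \<and> lattice_dist (xi a q - \<beta>) \<le> sqrt \<Delta>}" for \<beta>
  have A: "A \<beta> = prod.swap ` {r \<in> Sigma S R. lattice_dist (xi (snd r) (fst r) - \<beta>) \<le> sqrt \<Delta>}" for \<beta>
    by (auto simp: A_def image_iff)
  have card: "card (A \<beta>) = card {r \<in> Sigma S R. lattice_dist (xi (snd r) (fst r) - \<beta>) \<le> sqrt \<Delta>}" for \<beta>
    unfolding A by (rule card_image) (simp add: inj_on_def prod_eq_iff)
  have "bdd_above (range (\<lambda>\<beta>. real (card (A \<beta>))))"
    using assms by (intro bdd_aboveI[where M = "real (card (Sigma S R))"]) (auto simp: card intro!: card_mono)
  then have "real (card (A \<alpha>)) \<le> (SUP \<beta>. real (card (A \<beta>)))"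
    by (rule cSUP_upper[OF UNIV_I])
  moreover have "Kfun S R \<Delta> = (SUP \<beta>. real (card (A \<beta>)))"
    unfolding Kfun_def A_def ..
  ultimately show ?thesis by (simp only: card)
qed

lemma gaussian_large_sieve:
  fixes an :: "complex \<Rightarrow> complex" and R :: "complex \<Rightarrow> complex set" and N :: real
  assumes N: "2 \<le> N" and finS: "finite S" and S: "\<forall>q\<in>S. gint q \<and> q \<noteq> 0"
    and \<Delta>: "0 < \<Delta>" "\<Delta> \<le> 1/2" and R: "\<forall>q\<in>S. reduced_residue_system (R q) q"
  shows "(\<Sum>q\<in>S. \<Sum>a\<in>R q. (cmod (\<Sum>n\<in>{n. gint n \<and> gnorm n \<le> N}. an n * e (Re (n * a / q))))^2)
    \<le> 7776 * Kfun S R \<Delta> * (N + 1 / \<Delta>) * (\<Sum>n\<in>{n. gint n \<and> gnorm n \<le> N}. (cmod (an n))^2)"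
proof -
  define Dn where "Dn = {n :: int \<times> int. of_int ((fst n)^2 + (snd n)^2) \<le> N}"
  have finR: "\<forall>q\<in>S. finite (R q)"
    using S R finite_reduced_residue_system by blast
  have fin: "finite (Sigma S R)"
    using finS finR by (intro finite_SigmaI) auto
  have "(\<Sum>q\<in>S. \<Sum>a\<in>R q. (cmod (\<Sum>n\<in>{n. gint n \<and> gnorm n \<le> N}. an n * e (Re (n * a / q))))^2)
      = (\<Sum>r\<in>Sigma S R. (cmod (\<Sum>n\<in>Dn. an (gauss n) * e_dot n (xi (snd r) (fst r))))^2)"
    unfolding gint_disc_eq_image Dn_def sum.Sigma[OF finS finR]
    by (simp add: sum.reindex inj_on_gauss e_Re_gauss_mult_div case_prod_beta)
  also have "\<dots> \<le> 7776 * Kfun S R \<Delta> * (N + 1 / \<Delta>) * (\<Sum>n\<in>Dn. (cmod (an (gauss n)))^2)"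
    by (rule large_sieve_torus_Delta[OF fin N _ \<Delta> card_le_Kfun[OF fin]]) (simp add: Dn_def)
  also have "(\<Sum>n\<in>Dn. (cmod (an (gauss n)))^2) = (\<Sum>n\<in>{n. gint n \<and> gnorm n \<le> N}. (cmod (an n))^2)"
    unfolding gint_disc_eq_image Dn_def by (simp add: sum.reindex inj_on_gauss)
  finally show ?thesis .
qed

theorem corollary1:
  "\<exists>C>0. \<forall>(Q::nat) (N::nat) (an::complex \<Rightarrow> complex) (S::complex set) (\<Delta>::real)
       (R::complex \<Rightarrow> complex set).
     N \<ge> 2 \<longrightarrow>
     S \<subseteq> {q. gint q \<and> q \<noteq> 0 \<and> cmod q \<le> sqrt (real Q)} \<longrightarrow>
     0 < \<Delta> \<longrightarrow> \<Delta> \<le> 1/2 \<longrightarrow>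
     (\<forall>q\<in>S. reduced_residue_system (R q) q) \<longrightarrow>
     (\<Sum>q\<in>S. \<Sum>a\<in>R q.
        (cmod (\<Sum>n\<in>{n. gint n \<and> gnorm n \<le> real N}. an n * e (Re (n * a / q))))^2)
     \<le> C * Kfun S R \<Delta> * (real N + 1 / \<Delta>) *
        (\<Sum>n\<in>{n. gint n \<and> gnorm n \<le> real N}. (cmod (an n))^2)"
  by (intro exI[of _ "7776 :: real"] conjI allI impI gaussian_large_sieve)
    (auto intro: finite_subset[OF _ finite_gint_cball])

end
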